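(* Consider $\dot y=A(t)y+B(t)(u+\Delta(y,t))$, $y\in\mathbb{R}^{\bar n}$, $u\in\mathbb{R}^{\bar m}$, with continuous, bounded, $T$-periodic $A,B$ and unknown bounded $\Delta$, and a continuous $T$-periodic $K(t)$ such that the origin of $\dot\chi=A^{cl}(t)\chi$, $A^{cl}=A+BK$, is exponentially stable, with state-transition matrix $\Psi_{A^{cl}}$. Let $(L(t),F)$ be a real $cT$-periodic Floquet--Lyapunov factorization of this closed-loop system for some positive integer $c$, i.e. $\Psi_{A^{cl}}(t,0)=L(t)e^{Ft}$ with $F$ real constant and $L$ real, nonsingular, $\mathcal{C}^1$, $L(t+cT)=L(t)$. Suppose $F$ has a real invariant subspace $\Lambda$ of codimension $\bar m$ ($F\Lambda\subseteq\Lambda$), and let $\hat S\in\mathbb{R}^{\bar m\times\bar n}$ be a full-rank left annihilator of $\Lambda$. If $S(t):=\hat S L^{-1}(t)$ satisfies $\operatorname{rank}[S(t)B(t)]=\bar m$ for all $t\in[0,cT)$, then forward invariance of $S(t)y(t)\equiv0$ for $t\ge t_0$ corresponds to the system experiencing the equivalent control $u_{eq}(t)=K(t)y(t)-\Delta(y(t),t)$ for all $t\ge t_0$.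
   Context: Equivalent control: the control obtained from requiring $\frac{d}{dt}(S(t)y(t))\equiv0$ along motions satisfying $S(t)y(t)=0$. *)

theory Defs
  imports "HOL-Analysis.Analysis"
begin

definition mpow :: "real^'n^'n \<Rightarrow> nat \<Rightarrow> real^'n^'n" where
  "mpow M k = ((\<lambda>X. X ** M) ^^ k) (mat 1)"

definition mexp :: "real^'n^'n \<Rightarrow> real^'n^'n" where
  "mexp M = (\<Sum>k. (1 / fact k) *\<^sub>R mpow M k)"

definition state_transition ::
  "(real \<Rightarrow> real^'n^'n) \<Rightarrow> (real \<Rightarrow> real \<Rightarrow> real^'n^'n) \<Rightarrow> bool" where
  "state_transition Acl Psi \<longleftrightarrow>
     (\<forall>s. Psi s s = mat 1 \<and>
          (\<forall>t. ((\<lambda>t. Psi t s) has_vector_derivative (Acl t ** Psi t s)) (at t)))"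

definition exp_stable :: "(real \<Rightarrow> real^'n^'n) \<Rightarrow> bool" where
  "exp_stable Acl \<longleftrightarrow>
     (\<exists>k>0. \<exists>\<gamma>>0. \<forall>(x::real \<Rightarrow> real^'n) t0.
        (\<forall>t\<ge>t0. (x has_vector_derivative (Acl t *v x t)) (at t within {t0..})) \<longrightarrow>
        (\<forall>t\<ge>t0. norm (x t) \<le> k * exp (- \<gamma> * (t - t0)) * norm (x t0)))"

end

theory Submission
  imports Defs "HOL-Library.Periodic_Fun"
begin

text \<open>Because \<open>\<Lambda>\<close> is the kernel of \<open>Shat\<close> and is \<open>F\<close>-invariant, \<open>Shat F = M Shat\<close> for
  some square \<open>M\<close>. Differentiating \<open>\<Psi>(t, 0) = L(t) mexp (t F)\<close> gives \<open>L' = A\<^sub>c\<^sub>l L - L F\<close>, hence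
  \<open>S' = M S - S A\<^sub>c\<^sub>l\<close>, and along every motion the sliding variable \<open>z = S y\<close> obeys
  \<open>z' = M z + S B (u + \<Delta> - K y)\<close>. By periodicity and the rank hypothesis \<open>S B\<close> is invertible
  at all times, so \<open>z \<equiv> 0\<close> forces \<open>u = K y - \<Delta>\<close>; conversely, under that control \<open>z' = M z\<close>,
  and \<open>z\<close> stays zero once \<open>z(t\<^sub>0) = 0\<close>.\<close>

lemma matrix_add_rdistrib: "(A + B) ** C = A ** C + B ** (C :: 'a::semiring_1^'p^'n)"
  by (simp add: matrix_matrix_mult_def vec_eq_iff sum.distrib distrib_right)

lemma bounded_bilinear_matrix_matrix_mult:
  "bounded_bilinear ((**) :: real^'n^'m \<Rightarrow> real^'p^'n \<Rightarrow> real^'p^'m)"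
  unfolding bilinear_conv_bounded_bilinear[symmetric] bilinear_def
  by (auto intro!: linearI simp: matrix_add_ldistrib matrix_add_rdistrib
      scalar_matrix_assoc matrix_scalar_ac)

lemma bounded_bilinear_matrix_vector_mult:
  "bounded_bilinear ((*v) :: real^'n^'m \<Rightarrow> real^'n \<Rightarrow> real^'m)"
  unfolding bilinear_conv_bounded_bilinear[symmetric] bilinear_def
  by (auto intro!: linearI simp: matrix_vector_right_distrib matrix_vector_mult_add_rdistrib
      matrix_vector_mult_scaleR scaleR_matrix_vector_assoc)

lemma bounded_linear_matrix_nth: "bounded_linear (\<lambda>M :: real^'n^'m. M $ i $ j)"
  using bounded_linear_compose[OF bounded_linear_vec_nth[of j] bounded_linear_vec_nth[of i]]
  by (simp add: o_def)

lemma has_vector_derivative_matrix_entrywise: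
  fixes f :: "real \<Rightarrow> real^'n^'m"
  assumes "\<And>i j. ((\<lambda>t. f t $ i $ j) has_real_derivative D $ i $ j) (at t within S)"
  shows "(f has_vector_derivative D) (at t within S)"
  unfolding has_vector_derivative_def
  using assms
  by (subst has_derivative_componentwise_within)
     (auto simp: Basis_vec_def inner_axis has_field_derivative_def mult_commute_abs
       cart_eq_inner_axis[symmetric])

lemma differentiable_matrix_entrywise:
  fixes f :: "real \<Rightarrow> real^'n^'m"
  assumes "\<And>i j. (\<lambda>t. f t $ i $ j) differentiable (at t within S)"
  shows "f differentiable (at t within S)"
  using assms
  by (subst differentiable_componentwise_within)
     (auto simp: Basis_vec_def inner_axis cart_eq_inner_axis[symmetric])

section \<open>The matrix exponential\<close>

lemma mpow_0 [simp]: "mpow M 0 = mat 1"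
  by (simp add: mpow_def)

lemma mpow_Suc: "mpow M (Suc k) = mpow M k ** M"
  by (simp add: mpow_def)

lemma mpow_scaleR: "mpow (t *\<^sub>R M) k = (t ^ k) *\<^sub>R mpow (M :: real^'n^'n) k"
  by (induction k) (simp_all add: mpow_Suc scalar_matrix_assoc matrix_scalar_ac)

lemma mpow_zero: "mpow (0 :: real^'n^'n) k = (if k = 0 then mat 1 else 0)"
  by (induction k) (simp_all add: mpow_Suc)

lemma summable_mexp: "summable (\<lambda>k. (1 / fact k) *\<^sub>R mpow (M :: real^'n^'n) k)"
proof -
  obtain C where "0 < C" and C: "\<And>a b. norm ((a :: real^'n^'n) ** (b :: real^'n^'n)) \<le> norm a * norm b * C"
    using bounded_bilinear.pos_bounded[OF bounded_bilinear_matrix_matrix_mult] by blast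
  define I where "I = norm (mat 1 :: real^'n^'n)"
  have mpow_bound: "norm (mpow M k) \<le> I * (norm M * C) ^ k" for k
  proof (induction k)
    case (Suc k)
    have "norm (mpow M (Suc k)) \<le> norm (mpow M k) * (norm M * C)"
      unfolding mpow_Suc using C by (simp add: mult.assoc)
    also have "\<dots> \<le> I * (norm M * C) ^ k * (norm M * C)"
      using Suc \<open>0 < C\<close> by (intro mult_right_mono) auto
    finally show ?case by (simp add: algebra_simps)
  qed (simp add: I_def)
  show ?thesis
  proof (rule summable_comparison_test)
    show "summable (\<lambda>k. I * (inverse (fact k) * (norm M * C) ^ k))"
      by (rule summable_mult[OF summable_exp])
    show "\<exists>N. \<forall>k\<ge>N. norm ((1 / fact k) *\<^sub>R mpow M k) \<le> I * (inverse (fact k) * (norm M * C) ^ k)"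
    proof (intro exI allI impI)
      fix k :: nat
      have "norm ((1 / fact k) *\<^sub>R mpow M k) = inverse (fact k) * norm (mpow M k)"
        by (simp add: divide_inverse)
      also have "\<dots> \<le> inverse (fact k) * (I * (norm M * C) ^ k)"
        by (intro mult_left_mono mpow_bound) simp
      finally show "norm ((1 / fact k) *\<^sub>R mpow M k) \<le> I * (inverse (fact k) * (norm M * C) ^ k)"
        by (simp only: mult.left_commute)
    qed
  qed
qed

lemma mexp_sums: "(\<lambda>k. (1 / fact k) *\<^sub>R mpow M k) sums mexp (M :: real^'n^'n)"
  unfolding mexp_def by (rule summable_sums[OF summable_mexp])

lemma mexp_zero: "mexp (0 :: real^'n^'n) = mat 1"
proof -
  have "(\<lambda>k. (1 / fact k) *\<^sub>R mpow (0 :: real^'n^'n) k) sums (\<Sum>k\<in>{0}. (1 / fact k) *\<^sub>R mpow 0 k)"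
    by (rule sums_finite) (auto simp: mpow_zero)
  from sums_unique2[OF mexp_sums this] show ?thesis by simp
qed

lemma mexp_commute:
  assumes "F ** M = M ** (F :: real^'n^'n)"
  shows "F ** mexp M = mexp M ** F"
proof -
  have F_mpow: "F ** mpow M k = mpow M k ** F" for k
    by (induction k) (simp_all add: mpow_Suc matrix_mul_assoc assms, metis matrix_mul_assoc assms)
  have F_terms: "F ** ((1 / fact k) *\<^sub>R mpow M k) = ((1 / fact k) *\<^sub>R mpow M k) ** F" for k
    by (simp add: matrix_scalar_ac scalar_matrix_assoc[symmetric] F_mpow)
  have "(\<lambda>k. ((1 / fact k) *\<^sub>R mpow M k) ** F) sums (F ** mexp M)"
    using bounded_linear.sums[OF bounded_bilinear.bounded_linear_right[OF
          bounded_bilinear_matrix_matrix_mult, of F] mexp_sums[of M]]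
    by (simp only: F_terms)
  moreover have "(\<lambda>k. ((1 / fact k) *\<^sub>R mpow M k) ** F) sums (mexp M ** F)"
    by (rule bounded_linear.sums[OF bounded_bilinear.bounded_linear_left[OF
          bounded_bilinear_matrix_matrix_mult] mexp_sums])
  ultimately show ?thesis by (rule sums_unique2)
qed

lemma has_vector_derivative_mexp:
  "((\<lambda>t. mexp (t *\<^sub>R F)) has_vector_derivative mexp (t *\<^sub>R F) ** (F :: real^'n^'n)) (at t within S)"
proof (rule has_vector_derivative_matrix_entrywise)
  fix i j
  define c where "c k = mpow F k $ i $ j / fact k" for k
  have entry_sums: "(\<lambda>k. c k * s ^ k) sums (mexp (s *\<^sub>R F) $ i $ j)" for s
    using bounded_linear.sums[OF bounded_linear_matrix_nth[of i j] mexp_sums[of "s *\<^sub>R F"]]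
    by (simp add: c_def mpow_scaleR mult.commute)
  have entry_times_F: "bounded_linear (\<lambda>X :: real^'n^'n. (X ** F) $ i $ j)"
    using bounded_linear_compose[OF bounded_linear_matrix_nth[of i j]
        bounded_bilinear.bounded_linear_left[OF bounded_bilinear_matrix_matrix_mult, of F]]
    by (simp add: o_def)
  have diffs_eq: "diffs c k * t ^ k = (((1 / fact k) *\<^sub>R mpow (t *\<^sub>R F) k) ** F) $ i $ j" for k
  proof -
    have "diffs c k = mpow F (Suc k) $ i $ j / fact k"
      by (simp add: diffs_def c_def fact_Suc del: of_nat_Suc)
    then show ?thesis
      by (simp add: mpow_Suc mpow_scaleR scalar_matrix_assoc[symmetric])
  qed
  from bounded_linear.sums[OF entry_times_F mexp_sums]
  have "(\<lambda>k. diffs c k * t ^ k) sums ((mexp (t *\<^sub>R F) ** F) $ i $ j)"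
    by (simp only: diffs_eq)
  then have derivative_value: "(\<Sum>k. diffs c k * t ^ k) = (mexp (t *\<^sub>R F) ** F) $ i $ j"
    by (rule sums_unique[symmetric])
  have entry_fun: "(\<lambda>s. mexp (s *\<^sub>R F) $ i $ j) = (\<lambda>s. \<Sum>k. c k * s ^ k)"
    by (intro ext sums_unique entry_sums)
  have "((\<lambda>s. \<Sum>k. c k * s ^ k) has_real_derivative (\<Sum>k. diffs c k * t ^ k)) (at t)"
    by (rule termdiffs_strong_converges_everywhere[OF sums_summable[OF entry_sums]])
  then show "((\<lambda>s. mexp (s *\<^sub>R F) $ i $ j) has_real_derivative (mexp (t *\<^sub>R F) ** F) $ i $ j)
      (at t within S)"
    unfolding entry_fun derivative_value by (rule has_field_derivative_at_within)
qed

lemma has_vector_derivative_mexp_reflect: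
  "((\<lambda>t. mexp ((a - t) *\<^sub>R F)) has_vector_derivative - (mexp ((a - t) *\<^sub>R F) ** (F :: real^'n^'n)))
    (at t within S)"
proof -
  have "((\<lambda>t. a - t) has_vector_derivative -1) (at t within S)"
    by (auto intro!: derivative_eq_intros)
  from vector_diff_chain_within[OF this has_vector_derivative_mexp]
  show ?thesis by (simp add: o_def)
qed

lemma mexp_scaleR_commute: "F ** mexp (s *\<^sub>R F) = mexp (s *\<^sub>R F) ** (F :: real^'n^'n)"
  by (rule mexp_commute) (simp add: scalar_matrix_assoc[symmetric] matrix_scalar_ac)

lemma mexp_scaleR_inverse: "mexp (s *\<^sub>R F) ** mexp ((- s) *\<^sub>R F) = mat (1 :: real)"
  for F :: "real^'n^'n"
proof -
  let ?G = "\<lambda>s. mexp (s *\<^sub>R F) ** mexp ((0 - s) *\<^sub>R F)"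
  have "((\<lambda>s. mexp (s *\<^sub>R F) ** mexp ((0 - s) *\<^sub>R F)) has_vector_derivative 0) (at x within UNIV)" for x
  proof -
    have "(?G has_vector_derivative
        mexp (x *\<^sub>R F) ** - (mexp ((0 - x) *\<^sub>R F) ** F) + (mexp (x *\<^sub>R F) ** F) ** mexp ((0 - x) *\<^sub>R F))
        (at x within UNIV)"
      by (rule bounded_bilinear.has_vector_derivative[OF bounded_bilinear_matrix_matrix_mult
            has_vector_derivative_mexp has_vector_derivative_mexp_reflect])
    moreover have "mexp (x *\<^sub>R F) ** - (mexp ((0 - x) *\<^sub>R F) ** F)
        + (mexp (x *\<^sub>R F) ** F) ** mexp ((0 - x) *\<^sub>R F) = 0"
      using mexp_scaleR_commute[of F "0 - x"]
      by (simp add: bounded_bilinear.minus_right[OF bounded_bilinear_matrix_matrix_mult]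
          matrix_mul_assoc[symmetric])
    ultimately show ?thesis by simp
  qed
  then obtain C where C: "\<And>s. ?G s = C"
    using has_vector_derivative_zero_constant[of UNIV ?G] by auto
  have "?G s = ?G 0" by (simp only: C)
  then show ?thesis by (simp add: mexp_zero)
qed

lemma matrix_inv_right: "invertible A \<Longrightarrow> A ** matrix_inv A = mat 1"
  and matrix_inv_left: "invertible A \<Longrightarrow> matrix_inv A ** A = mat 1"
  for A :: "real^'n^'n"
  unfolding invertible_def matrix_inv_def by (metis (mono_tags, lifting) someI_ex)+

lemma matrix_inv_nth_cramer:
  fixes A :: "real^'n^'n"
  assumes "invertible A"
  shows "matrix_inv A $ k $ j = det (\<chi> i l. if l = k then axis j 1 $ i else A $ i $ l) / det A"
proof -
  have "A *v (matrix_inv A *v axis j 1) = axis j 1"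
    by (simp add: matrix_vector_mul_assoc matrix_inv_right[OF assms])
  then have "matrix_inv A *v axis j 1 = (\<chi> k. det (\<chi> i l. if l = k then axis j 1 $ i else A $ i $ l) / det A)"
    using cramer[of A] assms by (simp add: invertible_det_nz)
  moreover have "(matrix_inv A *v axis j 1) $ k = matrix_inv A $ k $ j"
    by (simp add: matrix_vector_mult_basis column_def)
  ultimately show ?thesis by simp
qed

lemma differentiable_det:
  fixes N :: "real \<Rightarrow> real^'n^'n"
  assumes "\<And>i j. (\<lambda>t. N t $ i $ j) differentiable (at t within S)"
  shows "(\<lambda>t. det (N t)) differentiable (at t within S)"
proof -
  have "(\<lambda>t. \<Prod>i\<in>UNIV. N t $ i $ p i) differentiable (at t within S)" for p :: "'n \<Rightarrow> 'n"
  proof -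
    have "\<forall>i. \<exists>D. ((\<lambda>t. N t $ i $ p i) has_derivative D) (at t within S)"
      using assms unfolding differentiable_def by blast
    then obtain D where D: "\<And>i. ((\<lambda>t. N t $ i $ p i) has_derivative D i) (at t within S)"
      by (metis choice)
    show ?thesis
      unfolding differentiable_def using has_derivative_prod[of UNIV "\<lambda>i t. N t $ i $ p i" D t S] D
      by blast
  qed
  then show ?thesis
    unfolding det_def by (intro differentiable_sum differentiable_mult differentiable_const) auto
qed

lemma differentiable_matrix_inv:
  fixes L :: "real \<Rightarrow> real^'n^'n"
  assumes "\<And>s. invertible (L s)" and "\<And>i j. (\<lambda>s. L s $ i $ j) differentiable (at t within S)"
  shows "(\<lambda>s. matrix_inv (L s)) differentiable (at t within S)"
proof (rule differentiable_matrix_entrywise)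
  fix k j
  have "(\<lambda>s. (\<chi> i l. if l = k then axis j 1 $ i else L s $ i $ l) $ i' $ l') differentiable (at t within S)"
    for i' l' using assms(2)[of i' l'] by (cases "l' = k") simp_all
  then show "(\<lambda>s. matrix_inv (L s) $ k $ j) differentiable (at t within S)"
    using assms by (simp add: matrix_inv_nth_cramer invertible_det_nz differentiable_divide differentiable_det)
qed

lemma has_vector_derivative_matrix_inv:
  fixes L :: "real \<Rightarrow> real^'n^'n"
  assumes inv: "\<And>s. invertible (L s)" and L': "(L has_vector_derivative L') (at t)"
  shows "((\<lambda>s. matrix_inv (L s)) has_vector_derivative
           - (matrix_inv (L t) ** L' ** matrix_inv (L t))) (at t)"
proof -
  have "(\<lambda>s. L s $ i $ j) differentiable (at t)" for i j
    using bounded_linear.has_vector_derivative[OF bounded_linear_matrix_nth L']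
    by (rule differentiableI_vector)
  then have "(\<lambda>s. matrix_inv (L s)) differentiable (at t)"
    using differentiable_matrix_inv[of L, OF inv] by blast
  then obtain D where D: "((\<lambda>s. matrix_inv (L s)) has_vector_derivative D) (at t)"
    using vector_derivative_works by blast
  have "((\<lambda>s. L s ** matrix_inv (L s)) has_vector_derivative L t ** D + L' ** matrix_inv (L t)) (at t)"
    by (rule bounded_bilinear.has_vector_derivative[OF bounded_bilinear_matrix_matrix_mult L' D])
  moreover have "((\<lambda>s. L s ** matrix_inv (L s)) has_vector_derivative 0) (at t)"
    by (simp add: matrix_inv_right[OF inv])
  ultimately have "L t ** D + L' ** matrix_inv (L t) = 0"
    by (rule vector_derivative_unique_at)
  then have "matrix_inv (L t) ** (L t ** D) = - (matrix_inv (L t) ** L' ** matrix_inv (L t))"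
    by (simp add: eq_neg_iff_add_eq_0[symmetric] matrix_mul_assoc
        bounded_bilinear.minus_right[OF bounded_bilinear_matrix_matrix_mult])
  with D show ?thesis
    by (simp add: matrix_mul_assoc matrix_inv_left[OF inv])
qed

section \<open>The Floquet--Lyapunov factor\<close>

lemma floquet_factor_derivative:
  assumes "state_transition Acl Psi" and floquet: "\<And>t. Psi t 0 = L t ** mexp (t *\<^sub>R F)"
    and L': "(L has_vector_derivative L') (at t)"
  shows "L' = Acl t ** L t - L t ** F"
proof -
  let ?E = "\<lambda>t. mexp (t *\<^sub>R F)"
  have "((\<lambda>t. L t ** ?E t) has_vector_derivative L t ** (?E t ** F) + L' ** ?E t) (at t)"
    by (rule bounded_bilinear.has_vector_derivative[OF bounded_bilinear_matrix_matrix_mult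
          L' has_vector_derivative_mexp])
  moreover have "((\<lambda>t. L t ** ?E t) has_vector_derivative Acl t ** (L t ** ?E t)) (at t)"
    using assms(1) floquet[symmetric] unfolding state_transition_def by simp
  ultimately have "L t ** (?E t ** F) + L' ** ?E t = Acl t ** (L t ** ?E t)"
    by (rule vector_derivative_unique_at)
  then have "(L t ** F + L') ** ?E t = (Acl t ** L t) ** ?E t"
    by (simp add: matrix_add_rdistrib matrix_mul_assoc[symmetric] mexp_scaleR_commute[symmetric])
  then have "L t ** F + L' = Acl t ** L t"
    by (metis matrix_mul_assoc matrix_mul_rid mexp_scaleR_inverse)
  then show ?thesis by (simp add: algebra_simps)
qed

lemma floquet_factor_inverse_derivative:
  assumes "state_transition Acl Psi" and "\<And>t. Psi t 0 = L t ** mexp (t *\<^sub>R F)"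
    and inv: "\<And>s. invertible (L s)" and L': "(L has_vector_derivative L') (at t)"
  shows "((\<lambda>s. matrix_inv (L s)) has_vector_derivative
           F ** matrix_inv (L t) - matrix_inv (L t) ** Acl t) (at t)"
proof -
  have "matrix_inv (L t) ** (Acl t ** L t) ** matrix_inv (L t) = matrix_inv (L t) ** Acl t"
    by (simp add: matrix_mul_assoc[symmetric] matrix_inv_right[OF inv])
  moreover have "matrix_inv (L t) ** (L t ** F) ** matrix_inv (L t) = F ** matrix_inv (L t)"
    by (simp add: matrix_mul_assoc matrix_inv_left[OF inv])
  ultimately show ?thesis
    using has_vector_derivative_matrix_inv[OF inv L']
    unfolding floquet_factor_derivative[OF assms(1,2) L']
    by (simp add: bounded_bilinear.diff_left[OF bounded_bilinear_matrix_matrix_mult]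
        bounded_bilinear.diff_right[OF bounded_bilinear_matrix_matrix_mult])
qed

lemma floquet_sliding_matrix_derivative:
  assumes "state_transition Acl Psi" and "\<And>t. Psi t 0 = L t ** mexp (t *\<^sub>R F)"
    and "\<And>s. invertible (L s)" and "(L has_vector_derivative L') (at t)"
    and intertwining: "Shat ** F = M ** Shat"
  shows "((\<lambda>s. Shat ** matrix_inv (L s)) has_vector_derivative
           M ** (Shat ** matrix_inv (L t)) - (Shat ** matrix_inv (L t)) ** Acl t) (at t)"
proof -
  have "((\<lambda>s. Shat ** matrix_inv (L s)) has_vector_derivative
      Shat ** (F ** matrix_inv (L t) - matrix_inv (L t) ** Acl t)) (at t)"
    by (rule bounded_linear.has_vector_derivative[OF
          bounded_bilinear.bounded_linear_right[OF bounded_bilinear_matrix_matrix_mult]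
          floquet_factor_inverse_derivative[OF assms(1-4)]])
  then show ?thesis
    by (simp add: bounded_bilinear.diff_right[OF bounded_bilinear_matrix_matrix_mult]
        matrix_mul_assoc intertwining)
qed

lemma sliding_variable_has_vector_derivative:
  fixes S :: "real \<Rightarrow> real^'n^'m" and y :: "real \<Rightarrow> real^'n"
  assumes "(S has_vector_derivative M ** S t - S t ** (A t + B t ** K t)) (at t)"
    and "(y has_vector_derivative A t *v y t + B t *v v) (at t within X)"
  shows "((\<lambda>t. S t *v y t) has_vector_derivative
           M *v (S t *v y t) + (S t ** B t) *v (v - K t *v y t)) (at t within X)"
proof -
  have "((\<lambda>t. S t *v y t) has_vector_derivative
      S t *v (A t *v y t + B t *v v) + (M ** S t - S t ** (A t + B t ** K t)) *v y t)
      (at t within X)"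
    by (rule bounded_bilinear.has_vector_derivative[OF bounded_bilinear_matrix_vector_mult
          has_vector_derivative_at_within[OF assms(1)] assms(2)])
  then show ?thesis
    by (simp add: algebra_simps matrix_vector_mul_assoc[symmetric])
qed

section \<open>Kernels of full-rank matrices\<close>

lemma dim_matrix_kernel:
  fixes A :: "real^'n^'m"
  shows "dim {x. A *v x = 0} + rank A = CARD('n)"
proof -
  let ?R = "range ((*v) (transpose A))"
  have "{x. A *v x = 0} = ?R\<^sup>\<bottom>"
    using ker_orthogonal_comp_adjoint[of "(*v) A"] adjoint_matrix[of A]
    by (simp add: matrix_vector_mul_linear vimage_def)
  moreover have "subspace ?R"
    by (rule linear_subspace_image[OF matrix_vector_mul_linear subspace_UNIV])
  then have "dim (?R\<^sup>\<bottom>) + dim ?R = CARD('n)"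
    using dim_subspace_orthogonal_to_vectors[OF _ subspace_UNIV, of ?R]
    by (simp add: orthogonal_comp_def)
  moreover have "dim ?R = rank A"
    using rank_dim_range[of "transpose A"] rank_transpose[of A] by simp
  ultimately show ?thesis by simp
qed

lemma subspace_eq_matrix_kernel:
  fixes A :: "real^'n^'m"
  assumes "subspace V" and "dim V + rank A = CARD('n)" and "\<And>x. x \<in> V \<Longrightarrow> A *v x = 0"
  shows "V = {x. A *v x = 0}"
proof (rule subspace_dim_equal[OF assms(1)])
  show "subspace {x. A *v x = 0}"
    by (auto simp: subspace_def matrix_vector_right_distrib matrix_vector_mult_scaleR)
  show "dim {x. A *v x = 0} \<le> dim V"
    using dim_matrix_kernel[of A] assms(2) by simp
qed (use assms(3) in auto)

text \<open>With a right inverse \<open>R\<close> of \<open>A\<close>, every \<open>x - R A x\<close> lies in the kernel, so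
  \<open>M = A F R\<close> works.\<close>
lemma matrix_factor_through_invariant_kernel:
  fixes A :: "real^'n^'m" and F :: "real^'n^'n"
  assumes "rank A = CARD('m)" and invariant: "\<And>x. A *v x = 0 \<Longrightarrow> A *v (F *v x) = 0"
  shows "\<exists>M. A ** F = M ** A"
proof -
  obtain R :: "real^'m^'n" where R: "A ** R = mat 1"
    using assms(1) full_rank_surjective matrix_right_invertible_surjective by blast
  have "A ** F = (A ** F ** R) ** A"
  proof (subst matrix_eq, intro allI)
    fix x
    have "A *v (x - R *v (A *v x)) = 0"
      by (simp add: matrix_vector_mult_diff_distrib matrix_vector_mul_assoc matrix_mul_assoc R)
    then have "A *v (F *v (x - R *v (A *v x))) = 0" by (rule invariant)
    then show "(A ** F) *v x = (A ** F ** R ** A) *v x"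
      by (simp add: matrix_vector_mult_diff_distrib matrix_vector_mul_assoc matrix_mul_assoc)
  qed
  then show ?thesis by blast
qed

section \<open>Linear differential equations on a half-line\<close>

lemma at_within_atLeast_nontrivial:
  assumes "t0 \<le> t"
  shows "at t within {t0..} \<noteq> (bot :: real filter)"
proof -
  have "at_right t \<le> at t within {t0..}"
    by (rule at_le) (use assms in auto)
  then show ?thesis by (metis bot_unique trivial_limit_at_right_real)
qed

lemma linear_ode_zero_initial_value:
  fixes z :: "real \<Rightarrow> real^'m" and M :: "real^'m^'m"
  assumes ode: "\<And>t. t0 \<le> t \<Longrightarrow> (z has_vector_derivative M *v z t) (at t within {t0..})"
    and "z t0 = 0" and "t0 \<le> t"
  shows "z t = 0"
proof -
  let ?h = "\<lambda>s. mexp ((t0 - s) *\<^sub>R M) *v z s"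
  have "(?h has_vector_derivative 0) (at s within {t0..})" if "s \<in> {t0..}" for s
  proof -
    have "(?h has_vector_derivative
          mexp ((t0 - s) *\<^sub>R M) *v (M *v z s) + - (mexp ((t0 - s) *\<^sub>R M) ** M) *v z s)
        (at s within {t0..})"
      using that by (intro bounded_bilinear.has_vector_derivative[OF
          bounded_bilinear_matrix_vector_mult has_vector_derivative_mexp_reflect ode]) simp
    then show ?thesis
      by (simp add: matrix_vector_mul_assoc
          bounded_bilinear.minus_left[OF bounded_bilinear_matrix_vector_mult])
  qed
  then obtain C where C: "\<And>s. s \<in> {t0..} \<Longrightarrow> ?h s = C"
    using has_vector_derivative_zero_constant[of "{t0..}" ?h] by (auto simp: convex_real_interval)
  have "?h t = 0"
    using C[of t] C[of t0] assms(2,3) by simp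
  then have "(mexp ((t - t0) *\<^sub>R M) ** mexp ((- (t - t0)) *\<^sub>R M)) *v z t = 0"
    by (simp flip: matrix_vector_mul_assoc)
  then show ?thesis by (simp only: mexp_scaleR_inverse matrix_vector_mul_lid)
qed

lemma forced_linear_ode_zero_iff:
  fixes z :: "real \<Rightarrow> real^'m" and M :: "real^'m^'m"
    and G :: "real \<Rightarrow> real^'k^'m" and w :: "real \<Rightarrow> real^'k"
  assumes ode: "\<And>t. t0 \<le> t \<Longrightarrow> (z has_vector_derivative M *v z t + G t *v w t) (at t within {t0..})"
    and inj: "\<And>t. inj ((*v) (G t))"
  shows "(\<forall>t\<ge>t0. z t = 0) \<longleftrightarrow> z t0 = 0 \<and> (\<forall>t\<ge>t0. w t = 0)"
proof
  assume zero: "\<forall>t\<ge>t0. z t = 0"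
  have "w t = 0" if "t0 \<le> t" for t
  proof -
    have "(z has_vector_derivative 0) (at t within {t0..})"
      by (rule has_vector_derivative_transform[of t "{t0..}" _ "\<lambda>_. 0"])
         (use zero that in auto)
    with ode[OF that] have "M *v z t + G t *v w t = 0"
      using vector_derivative_unique_within[OF at_within_atLeast_nontrivial[OF that]] by blast
    then have "G t *v w t = G t *v 0"
      using zero that by simp
    then show "w t = 0" by (rule injD[OF inj])
  qed
  with zero show "z t0 = 0 \<and> (\<forall>t\<ge>t0. w t = 0)" by simp
next
  assume "z t0 = 0 \<and> (\<forall>t\<ge>t0. w t = 0)"
  then have "z t0 = 0" and no_input: "\<And>t. t0 \<le> t \<Longrightarrow> w t = 0" by auto
  have "(z has_vector_derivative M *v z t) (at t within {t0..})" if "t0 \<le> t" for t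
    using ode[OF that] no_input[OF that] by simp
  with \<open>z t0 = 0\<close> show "\<forall>t\<ge>t0. z t = 0"
    using linear_ode_zero_initial_value by blast
qed

lemma periodic_property_from_period_interval:
  fixes f :: "real \<Rightarrow> 'a"
  assumes "p > 0" and periodic: "\<And>t. f (t + p) = f t"
    and base: "\<And>t. 0 \<le> t \<Longrightarrow> t < p \<Longrightarrow> P (f t)"
  shows "P (f t)"
proof -
  interpret periodic_fun_simple f p by standard (rule periodic)
  define k where "k = \<lfloor>t / p\<rfloor>"
  have "0 \<le> t - of_int k * p" "t - of_int k * p < p"
    using floor_divide_lower[OF assms(1), of t] floor_divide_upper[OF assms(1), of t]
    by (simp_all add: k_def algebra_simps)
  then have "P (f (t - of_int k * p))" by (rule base)
  then show ?thesis by (simp add: minus_of_int)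
qed

theorem proposition2:
  fixes A :: "real \<Rightarrow> real^'n^'n"
    and B :: "real \<Rightarrow> real^'m^'n"
    and K :: "real \<Rightarrow> real^'n^'m"
    and \<Delta> :: "real^'n \<Rightarrow> real \<Rightarrow> real^'m"
    and T :: real and c :: nat
    and Psi :: "real \<Rightarrow> real \<Rightarrow> real^'n^'n"
    and L :: "real \<Rightarrow> real^'n^'n" and F :: "real^'n^'n"
    and \<Lambda> :: "(real^'n) set" and Shat :: "real^'n^'m"
    and S :: "real \<Rightarrow> real^'n^'m"
    and y :: "real \<Rightarrow> real^'n" and u :: "real \<Rightarrow> real^'m" and t0 :: real
  assumes T_pos: "T > 0"
    and A_cont: "continuous_on UNIV A" and A_bdd: "bounded (range A)"
    and A_per: "\<And>t. A (t + T) = A t"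
    and B_cont: "continuous_on UNIV B" and B_bdd: "bounded (range B)"
    and B_per: "\<And>t. B (t + T) = B t"
    and Delta_bdd: "bounded (range (\<lambda>(z, t). \<Delta> z t))"
    and K_cont: "continuous_on UNIV K" and K_per: "\<And>t. K (t + T) = K t"
    and stable: "exp_stable (\<lambda>t. A t + B t ** K t)"
    and Psi: "state_transition (\<lambda>t. A t + B t ** K t) Psi"
    and c_pos: "c > 0"
    and floquet: "\<And>t. Psi t 0 = L t ** mexp (t *\<^sub>R F)"
    and L_C1: "\<exists>L'. (\<forall>t. (L has_vector_derivative L' t) (at t)) \<and> continuous_on UNIV L'"
    and L_inv: "\<And>t. invertible (L t)"
    and L_per: "\<And>t. L (t + real c * T) = L t"
    and Lambda_sub: "subspace \<Lambda>"
    and Lambda_codim: "dim \<Lambda> + CARD('m) = CARD('n)"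
    and Lambda_inv: "\<And>x. x \<in> \<Lambda> \<Longrightarrow> F *v x \<in> \<Lambda>"
    and Shat_rank: "rank Shat = CARD('m)"
    and Shat_ann: "\<And>x. x \<in> \<Lambda> \<Longrightarrow> Shat *v x = 0"
    and S_def: "\<And>t. S t = Shat ** matrix_inv (L t)"
    and SB_rank: "\<And>t. 0 \<le> t \<Longrightarrow> t < real c * T \<Longrightarrow> rank (S t ** B t) = CARD('m)"
    and motion: "\<And>t. t \<ge> t0 \<Longrightarrow>
        (y has_vector_derivative (A t *v y t + B t *v (u t + \<Delta> (y t) t))) (at t within {t0..})"
  shows "(\<forall>t\<ge>t0. S t *v y t = 0) \<longleftrightarrow>
         (S t0 *v y t0 = 0 \<and> (\<forall>t\<ge>t0. u t = K t *v y t - \<Delta> (y t) t))"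
proof -
  define w where "w t = u t + \<Delta> (y t) t - K t *v y t" for t
  obtain L' where L': "\<And>t. (L has_vector_derivative L' t) (at t)"
    using L_C1 by blast
  have "\<Lambda> = {x. Shat *v x = 0}"
    using Lambda_sub Lambda_codim Shat_rank Shat_ann by (intro subspace_eq_matrix_kernel) auto
  then obtain M where M: "Shat ** F = M ** Shat"
    using matrix_factor_through_invariant_kernel[OF Shat_rank] Lambda_inv by blast
  have "S = (\<lambda>t. Shat ** matrix_inv (L t))"
    using S_def by auto
  then have S_derivative:
    "(S has_vector_derivative M ** S t - S t ** (A t + B t ** K t)) (at t)" for t
    using floquet_sliding_matrix_derivative[OF Psi floquet L_inv L' M] by simp
  have sliding_ode: "((\<lambda>t. S t *v y t) has_vector_derivative
      M *v (S t *v y t) + (S t ** B t) *v w t) (at t within {t0..})" if "t0 \<le> t" for t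
    using sliding_variable_has_vector_derivative[where A = A and B = B and K = K,
        OF S_derivative motion[OF that]]
    by (simp add: w_def)
  have "rank (S t ** B t) = CARD('m)" for t
  proof (rule periodic_property_from_period_interval[of "real c * T" "\<lambda>t. S t ** B t"])
    show "real c * T > 0" using c_pos T_pos by simp
    interpret B: periodic_fun_simple B T by standard (rule B_per)
    show "S (t + real c * T) ** B (t + real c * T) = S t ** B t" for t
      using B.plus_of_nat[of t c] by (simp add: S_def L_per)
  qed (rule SB_rank)
  then have SB_inj: "inj ((*v) (S t ** B t))" for t
    by (simp add: full_rank_injective)
  have "w t = 0 \<longleftrightarrow> u t = K t *v y t - \<Delta> (y t) t" for t
    by (simp add: w_def eq_diff_eq diff_eq_eq)
  then show ?thesis
    using forced_linear_ode_zero_iff[OF sliding_ode SB_inj] by simp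
qed

end
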